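(* Let $\alpha,\beta,\nu>0$ and set $\beta_t=t\beta$, $\alpha_t=\sqrt{t+1}\,\alpha$, $\gamma_t=\frac{\alpha\nu}{\beta\sqrt{t+1}}$, $\omega_t=1$. Then for every integer $t\ge1$ and every symmetric positive definite $\boldsymbol\Sigma\in\mathbb{R}^{d\times d}$ there exists a symmetric matrix $\boldsymbol H\in\mathbb{R}^{d\times d}$ such that $$\boldsymbol H\preceq\frac1{\alpha_t}\Big(\frac{\beta_{t+1}}{\beta_t}-\omega_t\Big)\boldsymbol I+\frac{\beta_{t+1}\gamma_t}{\alpha_t}\boldsymbol\Sigma\quad\text{and}\quad\nu\boldsymbol I\preceq\boldsymbol\Sigma^{-1/2}\boldsymbol H\boldsymbol\Sigma^{-1/2}.$$ In particular, along any run of the CASBO algorithm with these parameters, the constraints on $\boldsymbol H_k^t$ (with $\boldsymbol\Sigma=\boldsymbol\Sigma_k^t$) are always feasible.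
   Context: $\preceq$ denotes the Loewner order on symmetric matrices; $\boldsymbol\Sigma^{-1/2}$ is the inverse of the symmetric positive definite square root. In the CASBO algorithm, at iteration $t$ and for block $k$, a symmetric matrix $\boldsymbol H_k^t$ must be chosen satisfying exactly the two displayed constraints with $\boldsymbol\Sigma$ the current covariance $\boldsymbol\Sigma_k^t$ (which is symmetric positive definite). *)

theory Defs
  imports "HOL-Analysis.Analysis"
begin

text \<open>Square real matrices of an arbitrary finite dimension d = CARD('n).\<close>

definition sym_mat :: "real^'n^'n \<Rightarrow> bool" where
  "sym_mat A \<longleftrightarrow> transpose A = A"

definition psd_mat :: "real^'n^'n \<Rightarrow> bool" where
  "psd_mat A \<longleftrightarrow> sym_mat A \<and> (\<forall>x. 0 \<le> x \<bullet> (A *v x))"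

definition pd_mat :: "real^'n^'n \<Rightarrow> bool" where
  "pd_mat A \<longleftrightarrow> sym_mat A \<and> (\<forall>x. x \<noteq> 0 \<longrightarrow> 0 < x \<bullet> (A *v x))"

definition loewner_le :: "real^'n^'n \<Rightarrow> real^'n^'n \<Rightarrow> bool" (infix "\<preceq>\<^sub>L" 50) where
  "A \<preceq>\<^sub>L B \<longleftrightarrow> psd_mat (B - A)"

definition mat_sqrt :: "real^'n^'n \<Rightarrow> real^'n^'n" where
  "mat_sqrt A = (THE S. pd_mat S \<and> S ** S = A)"

definition mat_inv_sqrt :: "real^'n^'n \<Rightarrow> real^'n^'n" where
  "mat_inv_sqrt A = matrix_inv (mat_sqrt A)"

definition beta_t :: "real \<Rightarrow> nat \<Rightarrow> real" where "beta_t \<beta> t = real t * \<beta>"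
definition alpha_t :: "real \<Rightarrow> nat \<Rightarrow> real" where "alpha_t \<alpha> t = sqrt (real t + 1) * \<alpha>"
definition gamma_t :: "real \<Rightarrow> real \<Rightarrow> real \<Rightarrow> nat \<Rightarrow> real" where
  "gamma_t \<alpha> \<beta> \<nu> t = \<alpha> * \<nu> / (\<beta> * sqrt (real t + 1))"
definition omega_t :: "nat \<Rightarrow> real" where "omega_t t = 1"

end

theory Submission
  imports Defs
begin

text \<open>Take \<open>H = \<nu> \<Sigma>\<close>. For these schedules the coefficient of \<open>\<Sigma>\<close> in the upper bound is
  exactly \<open>\<nu>\<close> and the coefficient of the identity is \<open>1 / (t \<alpha>\<^sub>t) \<ge> 0\<close>, so the upper bound
  holds; and \<open>\<Sigma>\<^sup>-\<^sup>1\<^sup>/\<^sup>2 H \<Sigma>\<^sup>-\<^sup>1\<^sup>/\<^sup>2 = \<nu> I\<close>, so the lower bound holds with equality.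
  The substance is that \<open>\<Sigma>\<^sup>-\<^sup>1\<^sup>/\<^sup>2\<close> really inverts a square root of \<open>\<Sigma>\<close>: the positive
  definite square root exists and is unique. Both facts rest on the spectral theorem for symmetric
  matrices, proved by maximising the Rayleigh quotient on invariant subspaces.\<close>

lemma sym_mat_inner_mult_vec:
  fixes A :: "real^'n^'n"
  assumes "sym_mat A"
  shows "(A *v x) \<bullet> y = x \<bullet> (A *v y)"
  using assms unfolding sym_mat_def by (metis dot_lmul_matrix transpose_matrix_vector)

lemma linear_le_quadratic_imp_zero:
  fixes b c :: real
  assumes "\<And>s. 2 * s * b \<le> s\<^sup>2 * c"
  shows "b = 0"
proof (rule ccontr)
  assume "b \<noteq> 0"
  define k where "k = \<bar>c\<bar> + 1"
  have k: "k > 0" "c < 2 * k" unfolding k_def by auto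
  have "2 * (b / k) * b \<le> (b / k)\<^sup>2 * c" by (rule assms)
  then have "2 * k * b\<^sup>2 \<le> b\<^sup>2 * c"
    using k(1) by (simp add: field_simps power2_eq_square)
  with \<open>b \<noteq> 0\<close> k show False
    by (smt (verit) mult_le_cancel_left_pos mult.commute zero_less_power2)
qed

lemma rayleigh_max_imp_eigenvector:
  fixes A :: "real^'n^'n"
  assumes sym: "sym_mat A" and V: "subspace V" and inv: "\<forall>x\<in>V. A *v x \<in> V"
    and uV: "u \<in> V" and u1: "u \<bullet> u = 1"
    and umax: "\<forall>z\<in>V. z \<bullet> (A *v z) \<le> (u \<bullet> (A *v u)) * (z \<bullet> z)"
  shows "A *v u = (u \<bullet> (A *v u)) *\<^sub>R u"
proof -
  define m where "m = u \<bullet> (A *v u)"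
  define w where "w = A *v u - m *\<^sub>R u"
  have wV: "w \<in> V" unfolding w_def using V uV inv by (simp add: subspace_diff subspace_scale)
  have wu: "w \<bullet> u = 0" unfolding w_def m_def by (simp add: inner_diff_left u1 inner_commute[of "A *v u" u])
  have "2 * s * (w \<bullet> w) \<le> s\<^sup>2 * (m * (w \<bullet> w) - w \<bullet> (A *v w))" for s
  proof -
    \<comment> \<open>to first order in \<open>s\<close>, \<open>u + s w\<close> improves on \<open>u\<close> by \<open>2 s |w|\<^sup>2\<close>\<close>
    have "(u + s *\<^sub>R w) \<bullet> (A *v (u + s *\<^sub>R w)) \<le> m * ((u + s *\<^sub>R w) \<bullet> (u + s *\<^sub>R w))"
      using umax V uV wV unfolding m_def by (simp add: subspace_add subspace_scale)
    moreover have "w \<bullet> (A *v u) = w \<bullet> w"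
      using wu unfolding w_def by (simp add: inner_diff_right inner_commute)
    moreover have "u \<bullet> (A *v w) = w \<bullet> (A *v u)"
      using sym_mat_inner_mult_vec[OF sym, of u w] by (simp add: inner_commute)
    ultimately show ?thesis
      using wu u1 unfolding m_def
      by (simp add: matrix_vector_right_distrib matrix_vector_mult_scaleR inner_add
          inner_commute[of u w] power2_eq_square algebra_simps)
  qed
  then have "w \<bullet> w = 0" by (rule linear_le_quadratic_imp_zero)
  then show ?thesis unfolding w_def m_def by simp
qed

lemma rayleigh_quotient_attains_max:
  fixes A :: "real^'n^'n"
  assumes V: "subspace V" and "V \<noteq> {0}"
  obtains u where "u \<in> V" "u \<bullet> u = 1" "\<forall>z\<in>V. z \<bullet> (A *v z) \<le> (u \<bullet> (A *v u)) * (z \<bullet> z)"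
proof -
  define S where "S = V \<inter> sphere 0 1"
  obtain x where xV: "x \<in> V" and x0: "x \<noteq> 0" using assms subspace_0 by blast
  then have "x /\<^sub>R norm x \<in> S" unfolding S_def using V by (simp add: subspace_scale)
  then have "S \<noteq> {}" by blast
  moreover have "compact S" unfolding S_def
    using closed_subspace[OF V] compact_sphere by (simp add: closed_Int_compact)
  moreover have "continuous_on S (\<lambda>y. y \<bullet> (A *v y))"
    by (intro continuous_intros linear_continuous_on matrix_vector_mul_linear)
  ultimately obtain u where uS: "u \<in> S" and umax: "\<forall>y\<in>S. y \<bullet> (A *v y) \<le> u \<bullet> (A *v u)"
    using continuous_attains_sup by blast
  have "z \<bullet> (A *v z) \<le> (u \<bullet> (A *v u)) * (z \<bullet> z)" if zV: "z \<in> V" for z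
  proof (cases "z = 0")
    case False
    then have "z /\<^sub>R norm z \<in> S" unfolding S_def using V zV by (simp add: subspace_scale)
    with umax have "(z \<bullet> (A *v z)) / (norm z)\<^sup>2 \<le> u \<bullet> (A *v u)"
      by (force simp: matrix_vector_mult_scaleR power2_eq_square divide_inverse mult_ac)
    with False show ?thesis by (simp add: dot_square_norm divide_le_eq mult.commute)
  qed simp
  moreover have "u \<in> V" "u \<bullet> u = 1" using uS by (auto simp: S_def dot_square_norm)
  ultimately show thesis using that by blast
qed

text \<open>The eigenvalue of a unit eigenvector \<open>b\<close> is recorded as its Rayleigh quotient \<open>b \<bullet> A b\<close>.\<close>

definition orthonormal_eigenbasis :: "real^'n^'n \<Rightarrow> (real^'n) set \<Rightarrow> (real^'n) set \<Rightarrow> bool" where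
  "orthonormal_eigenbasis A V B \<longleftrightarrow> finite B \<and> B \<subseteq> V \<and>
     (\<forall>b\<in>B. \<forall>c\<in>B. b \<bullet> c = (if b = c then 1 else 0)) \<and>
     (\<forall>b\<in>B. A *v b = (b \<bullet> (A *v b)) *\<^sub>R b) \<and>
     (\<forall>x\<in>V. x = (\<Sum>b\<in>B. (b \<bullet> x) *\<^sub>R b))"

lemma orthonormal_eigenbasis_inner:
  "orthonormal_eigenbasis A V B \<Longrightarrow> b \<in> B \<Longrightarrow> c \<in> B \<Longrightarrow> b \<bullet> c = (if b = c then 1 else 0)"
  unfolding orthonormal_eigenbasis_def by blast

lemma orthonormal_eigenbasis_eigenvector:
  "orthonormal_eigenbasis A V B \<Longrightarrow> b \<in> B \<Longrightarrow> A *v b = (b \<bullet> (A *v b)) *\<^sub>R b"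
  unfolding orthonormal_eigenbasis_def by blast

lemma orthonormal_eigenbasis_expansion:
  "orthonormal_eigenbasis A V B \<Longrightarrow> x \<in> V \<Longrightarrow> x = (\<Sum>b\<in>B. (b \<bullet> x) *\<^sub>R b)"
  unfolding orthonormal_eigenbasis_def by blast

lemma orthonormal_eigenbasis_insert:
  fixes A :: "real^'n^'n"
  assumes B: "orthonormal_eigenbasis A {y \<in> V. y \<bullet> u = 0} B" and V: "subspace V"
    and uV: "u \<in> V" and u1: "u \<bullet> u = 1" and eig: "A *v u = (u \<bullet> (A *v u)) *\<^sub>R u"
  shows "orthonormal_eigenbasis A V (insert u B)"
proof -
  have bu: "b \<bullet> u = 0" if "b \<in> B" for b
    using B that unfolding orthonormal_eigenbasis_def by blast
  have uB: "u \<notin> B" using bu u1 by force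
  have "x = (\<Sum>b\<in>insert u B. (b \<bullet> x) *\<^sub>R b)" if xV: "x \<in> V" for x
  proof -
    define x' where "x' = x - (u \<bullet> x) *\<^sub>R u"
    have "x' \<in> V" "x' \<bullet> u = 0"
      unfolding x'_def using xV uV V u1
      by (simp_all add: subspace_diff subspace_scale inner_diff_left inner_commute[of x u])
    then have "x' = (\<Sum>b\<in>B. (b \<bullet> x') *\<^sub>R b)" using orthonormal_eigenbasis_expansion[OF B] by blast
    also have "\<dots> = (\<Sum>b\<in>B. (b \<bullet> x) *\<^sub>R b)"
      using bu by (intro sum.cong) (simp_all add: x'_def inner_diff_right)
    finally show ?thesis
      using B uB unfolding x'_def orthonormal_eigenbasis_def by (simp add: algebra_simps)
  qed
  moreover have "b \<bullet> c = (if b = c then 1 else 0)" if "b \<in> insert u B" "c \<in> insert u B" for b c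
    using that orthonormal_eigenbasis_inner[OF B] bu u1 uB by (auto simp: inner_commute)
  ultimately show ?thesis
    using B uV eig unfolding orthonormal_eigenbasis_def by auto
qed

lemma invariant_subspace_orthonormal_eigenbasis:
  fixes A :: "real^'n^'n"
  assumes sym: "sym_mat A"
  shows "subspace V \<Longrightarrow> \<forall>x\<in>V. A *v x \<in> V \<Longrightarrow> \<exists>B. orthonormal_eigenbasis A V B"
proof (induction "dim V" arbitrary: V rule: less_induct)
  case less
  show ?case
  proof (cases "V = {0}")
    case True
    then show ?thesis by (intro exI[of _ "{}"]) (auto simp: orthonormal_eigenbasis_def)
  next
    case False
    obtain u where uV: "u \<in> V" and u1: "u \<bullet> u = 1"
      and umax: "\<forall>z\<in>V. z \<bullet> (A *v z) \<le> (u \<bullet> (A *v u)) * (z \<bullet> z)"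
      using rayleigh_quotient_attains_max[OF less.prems(1) False] by blast
    have eig: "A *v u = (u \<bullet> (A *v u)) *\<^sub>R u"
      using rayleigh_max_imp_eigenvector[OF sym less.prems uV u1 umax] .
    define W where "W = {y \<in> V. y \<bullet> u = 0}"
    have W: "subspace W"
      unfolding W_def subspace_def using less.prems(1)
      by (auto simp: subspace_0 subspace_add subspace_scale inner_add_left)
    have "A *v y \<in> W" if "y \<in> W" for y
    proof -
      have "(A *v y) \<bullet> u = y \<bullet> (A *v u)" by (rule sym_mat_inner_mult_vec[OF sym])
      also have "\<dots> = (u \<bullet> (A *v u)) * (y \<bullet> u)" by (subst eig) simp
      finally show ?thesis using that less.prems(2) by (simp add: W_def)
    qed
    moreover have "dim W < dim V"
    proof -
      have "W \<subset> V" using uV u1 unfolding W_def by force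
      then show ?thesis
        using dim_psubset[of W V] W less.prems(1) by (metis span_eq_iff)
    qed
    ultimately obtain B where "orthonormal_eigenbasis A W B" using less.hyps W by blast
    then have "orthonormal_eigenbasis A V (insert u B)"
      unfolding W_def using orthonormal_eigenbasis_insert less.prems(1) uV u1 eig by blast
    then show ?thesis by blast
  qed
qed

lemma sym_mat_orthonormal_eigenbasis:
  fixes A :: "real^'n^'n"
  assumes "sym_mat A"
  obtains B where "orthonormal_eigenbasis A UNIV B"
  using invariant_subspace_orthonormal_eigenbasis[OF assms, of UNIV] by auto

lemma orthonormal_eigenbasis_inner_sum:
  assumes "orthonormal_eigenbasis A V B" "b \<in> B"
  shows "b \<bullet> (\<Sum>c\<in>B. f c *\<^sub>R c) = f b"
proof -
  have "finite B" using assms(1) unfolding orthonormal_eigenbasis_def by blast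
  have "b \<bullet> (\<Sum>c\<in>B. f c *\<^sub>R c) = (\<Sum>c\<in>B. if b = c then f c else 0)"
    unfolding inner_sum_right by (intro sum.cong) (simp_all add: orthonormal_eigenbasis_inner[OF assms])
  then show ?thesis using \<open>finite B\<close> assms(2) by simp
qed

definition spectral_mat :: "(real^'n) set \<Rightarrow> (real^'n \<Rightarrow> real) \<Rightarrow> real^'n^'n" where
  "spectral_mat B g = (\<chi> i j. \<Sum>b\<in>B. g b * b$i * b$j)"

lemma spectral_mat_mult_vec: "spectral_mat B g *v x = (\<Sum>b\<in>B. (g b * (b \<bullet> x)) *\<^sub>R b)"
proof -
  have "(spectral_mat B g *v x) $ i = (\<Sum>j\<in>UNIV. \<Sum>b\<in>B. g b * b$i * b$j * x$j)" for i
    by (simp add: spectral_mat_def matrix_vector_mult_def sum_distrib_right)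
  also have "\<dots> i = (\<Sum>b\<in>B. (g b * (b \<bullet> x)) *\<^sub>R b) $ i" for i
    by (subst sum.swap) (simp add: inner_vec_def sum_distrib_left mult_ac)
  finally show ?thesis by (simp add: vec_eq_iff)
qed

lemma sym_mat_spectral_mat: "sym_mat (spectral_mat B g)"
  unfolding sym_mat_def spectral_mat_def transpose_def by (simp add: vec_eq_iff mult_ac)

lemma spectral_mat_cong: "(\<And>b. b \<in> B \<Longrightarrow> g b = h b) \<Longrightarrow> spectral_mat B g = spectral_mat B h"
  unfolding spectral_mat_def by (simp cong: sum.cong)

lemma spectral_mat_zero [simp]: "spectral_mat B (\<lambda>b. 0) = 0"
  by (simp add: spectral_mat_def vec_eq_iff)

lemma spectral_mat_mult:
  assumes "orthonormal_eigenbasis A V B"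
  shows "spectral_mat B g ** spectral_mat B h = spectral_mat B (\<lambda>b. g b * h b)"
proof -
  have "spectral_mat B g *v (spectral_mat B h *v x) = spectral_mat B (\<lambda>b. g b * h b) *v x" for x
    unfolding spectral_mat_mult_vec
    using orthonormal_eigenbasis_inner_sum[OF assms, of _ "\<lambda>c. h c * (c \<bullet> x)"]
    by (intro sum.cong) (simp_all add: mult_ac)
  then show ?thesis by (simp add: matrix_eq matrix_vector_mul_assoc)
qed

lemma spectral_mat_eigenvalues:
  assumes "orthonormal_eigenbasis A UNIV B"
  shows "spectral_mat B (\<lambda>b. b \<bullet> (A *v b)) = A"
proof -
  have "spectral_mat B (\<lambda>b. b \<bullet> (A *v b)) *v x = (\<Sum>b\<in>B. (b \<bullet> x) *\<^sub>R (A *v b))" for x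
    unfolding spectral_mat_mult_vec using orthonormal_eigenbasis_eigenvector[OF assms]
    by (intro sum.cong refl) (metis mult.commute scaleR_scaleR)
  also have "\<dots> x = A *v (\<Sum>b\<in>B. (b \<bullet> x) *\<^sub>R b)" for x
    by (simp only: vec.sum matrix_vector_mult_scaleR)
  also have "\<dots> x = A *v x" for x
    by (simp only: orthonormal_eigenbasis_expansion[OF assms UNIV_I, symmetric])
  finally show ?thesis by (simp add: matrix_eq)
qed

lemma spectral_mat_one:
  assumes "orthonormal_eigenbasis A UNIV B"
  shows "spectral_mat B (\<lambda>b. 1) = mat 1"
  using orthonormal_eigenbasis_expansion[OF assms UNIV_I, symmetric]
  by (simp add: matrix_eq spectral_mat_mult_vec)

lemma pd_mat_spectral_mat:
  fixes A :: "real^'n^'n"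
  assumes B: "orthonormal_eigenbasis A UNIV B" and pos: "\<forall>b\<in>B. g b > 0"
  shows "pd_mat (spectral_mat B g)"
  unfolding pd_mat_def
proof (intro conjI allI impI sym_mat_spectral_mat)
  fix x :: "real^'n" assume "x \<noteq> 0"
  have "\<exists>b\<in>B. b \<bullet> x \<noteq> 0"
  proof (rule ccontr)
    assume "\<not> ?thesis"
    then have "(\<Sum>b\<in>B. (b \<bullet> x) *\<^sub>R b) = 0" by simp
    with \<open>x \<noteq> 0\<close> show False
      using orthonormal_eigenbasis_expansion[OF B UNIV_I, of x] by simp
  qed
  then obtain b where "b \<in> B" "b \<bullet> x \<noteq> 0" by blast
  moreover have "finite B" using B unfolding orthonormal_eigenbasis_def by blast
  ultimately have "0 < (\<Sum>b\<in>B. g b * (b \<bullet> x)\<^sup>2)"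
    using pos by (intro sum_pos2[of B b]) (auto simp: less_imp_le)
  then show "0 < x \<bullet> (spectral_mat B g *v x)"
    by (simp add: spectral_mat_mult_vec inner_sum_right power2_eq_square inner_commute mult_ac)
qed

lemma pd_mat_sqrt_unique:
  fixes S T :: "real^'n^'n"
  assumes S: "pd_mat S" and T: "pd_mat T" and eq: "S ** S = T ** T"
  shows "S = T"
proof -
  define D where "D = S - T"
  have "sym_mat D" using S T unfolding D_def pd_mat_def sym_mat_def by (simp add: transpose_def vec_eq_iff)
  then obtain B where B: "orthonormal_eigenbasis D UNIV B" using sym_mat_orthonormal_eigenbasis by blast
  have "b \<bullet> (D *v b) = 0" if "b \<in> B" for b
  proof -
    define \<mu> where "\<mu> = b \<bullet> (D *v b)"
    have Db: "D *v b = \<mu> *\<^sub>R b" unfolding \<mu>_def using orthonormal_eigenbasis_eigenvector[OF B that] .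
    have "b \<noteq> 0" using orthonormal_eigenbasis_inner[OF B that that] by auto
    \<comment> \<open>\<open>S D + D T = S\<^sup>2 - T\<^sup>2 = 0\<close>; paired with the eigenvector \<open>b\<close> this is \<open>\<mu> (b\<bullet>Sb + b\<bullet>Tb) = 0\<close>\<close>
    have "S *v (D *v b) + D *v (T *v b) = S *v (S *v b) - T *v (T *v b)"
      unfolding D_def by (simp add: matrix_vector_mult_diff_rdistrib vec.diff)
    also have "\<dots> = 0" using eq by (simp add: matrix_vector_mul_assoc)
    finally have SD: "S *v (D *v b) + D *v (T *v b) = 0" .
    have "b \<bullet> (S *v (D *v b)) + (D *v b) \<bullet> (T *v b) = 0"
      using arg_cong[OF SD, of "inner b"] sym_mat_inner_mult_vec[OF \<open>sym_mat D\<close>, of b "T *v b"]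
      by (simp add: inner_add_right)
    then have "\<mu> * (b \<bullet> (S *v b) + b \<bullet> (T *v b)) = 0"
      unfolding Db by (simp add: matrix_vector_mult_scaleR distrib_left)
    moreover have "b \<bullet> (S *v b) + b \<bullet> (T *v b) > 0"
      using S T \<open>b \<noteq> 0\<close> unfolding pd_mat_def by (simp add: add_pos_pos)
    ultimately show ?thesis unfolding \<mu>_def by simp
  qed
  then have "spectral_mat B (\<lambda>b. b \<bullet> (D *v b)) = spectral_mat B (\<lambda>b. 0)"
    by (rule spectral_mat_cong)
  then have "D = 0" unfolding spectral_mat_eigenvalues[OF B] by simp
  then show ?thesis unfolding D_def by simp
qed

lemma pd_mat_sqrt_exists:
  fixes A :: "real^'n^'n"
  assumes "pd_mat A"
  obtains S M where "pd_mat S" "S ** S = A" "S ** M = mat 1" "M ** S = mat 1"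
proof -
  obtain B where B: "orthonormal_eigenbasis A UNIV B"
    using assms sym_mat_orthonormal_eigenbasis unfolding pd_mat_def by blast
  define l where "l b = b \<bullet> (A *v b)" for b
  have lpos: "\<forall>b\<in>B. l b > 0"
  proof
    fix b assume "b \<in> B"
    then have "b \<noteq> 0" using orthonormal_eigenbasis_inner[OF B] by fastforce
    then show "l b > 0" using assms unfolding l_def pd_mat_def by blast
  qed
  define S where "S = spectral_mat B (\<lambda>b. sqrt (l b))"
  define M where "M = spectral_mat B (\<lambda>b. 1 / sqrt (l b))"
  have "pd_mat S" unfolding S_def using lpos by (intro pd_mat_spectral_mat[OF B]) auto
  moreover have "S ** S = spectral_mat B l"
    unfolding S_def spectral_mat_mult[OF B] using lpos by (intro spectral_mat_cong) (simp add: less_imp_le)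
  then have "S ** S = A" unfolding l_def spectral_mat_eigenvalues[OF B] .
  moreover have "S ** M = mat 1" "M ** S = mat 1"
    unfolding S_def M_def spectral_mat_mult[OF B] spectral_mat_one[OF B, symmetric]
    using lpos by (auto intro!: spectral_mat_cong)
  ultimately show thesis using that by blast
qed

lemma mat_sqrt_eqI:
  fixes A S :: "real^'n^'n"
  assumes "pd_mat S" "S ** S = A"
  shows "mat_sqrt A = S"
  unfolding mat_sqrt_def
proof (rule the_equality)
  show "pd_mat T \<and> T ** T = A \<Longrightarrow> T = S" for T
    using assms pd_mat_sqrt_unique[of T S] by simp
qed (use assms in simp)

lemma mat_inv_sqrt_sandwich:
  fixes A :: "real^'n^'n"
  assumes "pd_mat A"
  shows "mat_inv_sqrt A ** A ** mat_inv_sqrt A = mat 1"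
proof -
  obtain S M where S: "pd_mat S" "S ** S = A" and SM: "S ** M = mat 1" "M ** S = mat 1"
    using pd_mat_sqrt_exists[OF assms] .
  have "S ** mat_inv_sqrt A = mat 1 \<and> mat_inv_sqrt A ** S = mat 1"
    unfolding mat_inv_sqrt_def matrix_inv_def mat_sqrt_eqI[OF S]
    by (rule someI[of _ M]) (simp add: SM)
  moreover have "mat_inv_sqrt A ** A ** mat_inv_sqrt A = (mat_inv_sqrt A ** S) ** (S ** mat_inv_sqrt A)"
    unfolding S(2)[symmetric] by (simp add: matrix_mul_assoc)
  ultimately show ?thesis by simp
qed

lemma loewner_le_refl: "A \<preceq>\<^sub>L A"
  by (simp add: loewner_le_def psd_mat_def sym_mat_def transpose_def vec_eq_iff)

lemma loewner_le_add_scaled_id: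
  fixes A :: "real^'n^'n"
  assumes "c \<ge> 0"
  shows "A \<preceq>\<^sub>L c *\<^sub>R mat 1 + A"
  using assms unfolding loewner_le_def psd_mat_def sym_mat_def
  by (simp add: transpose_scalar transpose_mat scaleR_matrix_vector_assoc[symmetric])

lemma schedule_id_coefficient_nonneg:
  assumes "\<alpha> > 0" "\<beta> > 0" "t \<ge> 1"
  shows "(1 / alpha_t \<alpha> t) * (beta_t \<beta> (t + 1) / beta_t \<beta> t - omega_t t) \<ge> 0"
proof -
  have "beta_t \<beta> (t + 1) / beta_t \<beta> t = 1 + 1 / real t"
    using assms unfolding beta_t_def by (simp add: field_simps)
  then show ?thesis
    using assms unfolding alpha_t_def omega_t_def by simp
qed

lemma schedule_sigma_coefficient:
  assumes "\<alpha> > 0" "\<beta> > 0"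
  shows "beta_t \<beta> (t + 1) * gamma_t \<alpha> \<beta> \<nu> t / alpha_t \<alpha> t = \<nu>"
proof -
  define r where "r = sqrt (real t + 1)"
  have "r > 0" "real (t + 1) = r * r" unfolding r_def by simp_all
  then show ?thesis
    using assms unfolding beta_t_def gamma_t_def alpha_t_def r_def[symmetric] by (simp add: field_simps)
qed

theorem theorem3:
  fixes \<alpha> \<beta> \<nu> :: real and t :: nat and \<Sigma> :: "real^'n^'n"
  assumes "\<alpha> > 0" "\<beta> > 0" "\<nu> > 0" "t \<ge> 1" "pd_mat \<Sigma>"
  shows "\<exists>H :: real^'n^'n. sym_mat H \<and>
    H \<preceq>\<^sub>L ((1 / alpha_t \<alpha> t) * (beta_t \<beta> (t + 1) / beta_t \<beta> t - omega_t t)) *\<^sub>R mat 1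
          + (beta_t \<beta> (t + 1) * gamma_t \<alpha> \<beta> \<nu> t / alpha_t \<alpha> t) *\<^sub>R \<Sigma> \<and>
    \<nu> *\<^sub>R mat 1 \<preceq>\<^sub>L mat_inv_sqrt \<Sigma> ** H ** mat_inv_sqrt \<Sigma>"
proof -
  let ?H = "\<nu> *\<^sub>R \<Sigma>" and ?N = "mat_inv_sqrt \<Sigma>"
  have "sym_mat ?H"
    using assms(5) unfolding pd_mat_def sym_mat_def by (simp add: transpose_scalar)
  moreover have "?N ** ?H ** ?N = \<nu> *\<^sub>R (?N ** \<Sigma> ** ?N)"
    by (simp add: matrix_scalar_ac scalar_matrix_assoc)
  then have "\<nu> *\<^sub>R mat 1 \<preceq>\<^sub>L ?N ** ?H ** ?N"
    using mat_inv_sqrt_sandwich[OF assms(5)] loewner_le_refl by simp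
  ultimately show ?thesis
    unfolding schedule_sigma_coefficient[OF assms(1,2)]
    using loewner_le_add_scaled_id schedule_id_coefficient_nonneg[OF assms(1,2,4)] by blast
qed

end
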